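(* Let $X,Y\subseteq\omega$ and let $\prec_X$, $\prec_Y$ be transitive relations on $X$ and $Y$ respectively. Assume $f:X\to Y$ is a function which is surjective and satisfies $x\prec_X x'\iff f(x)\prec_Y f(x')$ for all $x,x'\in X$. Let $G_f=\{\langle x,f(x)\rangle\mid x\in X\}$. Then the map $\llbracket G_f\rrbracket$, given by $\llbracket G_f\rrbracket(I)=\{n\mid(\exists m\in I)\,\langle m,n\rangle\in G_f\}$, is a homeomorphism from $\mathcal{I}(\prec_X)$ onto $\mathcal{I}(\prec_Y)$. Moreover, if $\prec_X$ and $\prec_Y$ are c.e. and $f$ is computable, then $\llbracket G_f\rrbracket$ is a computable homeomorphism.
   Context: For a transitive relation $\prec$ on a set $S$, an ideal is a non-empty set $I\subseteq S$ that is a lower set ($b\prec a\in I\Rightarrow b\in I$) and directed (for $a,b\in I$ there is $c\in I$ with $a\prec c$, $b\prec c$). $\mathcal{I}(\prec)$ is the space of ideals with topology generated by $[n]_\prec=\{I\mid n\in I\}$, $n\in S$, an effective space with basic opens numbered by $n$. $\langle\cdot,\cdot\rangle$ is a computable pairing bijection on $\omega$. A computable homeomorphism is a homeomorphism such that preimages of basic open sets under it and its inverse are uniformly c.e. unions of basic open sets. *)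

theory Defs
  imports "HOL-Analysis.Analysis" "HOL-Library.Nat_Bijection"
begin

definition trans_on_set :: "nat set \<Rightarrow> (nat \<Rightarrow> nat \<Rightarrow> bool) \<Rightarrow> bool" where
  "trans_on_set S R \<longleftrightarrow>
     (\<forall>a\<in>S. \<forall>b\<in>S. \<forall>c\<in>S. R a b \<longrightarrow> R b c \<longrightarrow> R a c)"

definition is_ideal :: "nat set \<Rightarrow> (nat \<Rightarrow> nat \<Rightarrow> bool) \<Rightarrow> nat set \<Rightarrow> bool" where
  "is_ideal S R I \<longleftrightarrow>
     I \<noteq> {} \<and> I \<subseteq> S \<and>
     (\<forall>a\<in>I. \<forall>b\<in>S. R b a \<longrightarrow> b \<in> I) \<and>
     (\<forall>a\<in>I. \<forall>b\<in>I. \<exists>c\<in>I. R a c \<and> R b c)"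

definition basic_open :: "nat set \<Rightarrow> (nat \<Rightarrow> nat \<Rightarrow> bool) \<Rightarrow> nat \<Rightarrow> nat set set" where
  "basic_open S R n = {I. is_ideal S R I \<and> n \<in> I}"

definition ideal_space :: "nat set \<Rightarrow> (nat \<Rightarrow> nat \<Rightarrow> bool) \<Rightarrow> nat set topology" where
  "ideal_space S R = topology_generated_by {basic_open S R n | n. n \<in> S}"

definition induced_map :: "nat set \<Rightarrow> nat set \<Rightarrow> nat set" where
  "induced_map G I = {n. \<exists>m\<in>I. prod_encode (m, n) \<in> G}"

datatype recf = Zero | Succ | Proj nat | Cn recf "recf list" | Pr recf recf | Mn recf

inductive eval :: "recf \<Rightarrow> nat list \<Rightarrow> nat \<Rightarrow> bool" where
  eval_Zero: "eval Zero xs 0"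
| eval_Succ: "eval Succ (x # xs) (Suc x)"
| eval_Proj: "i < length xs \<Longrightarrow> eval (Proj i) xs (xs ! i)"
| eval_Cn: "length ys = length gs \<Longrightarrow> (\<forall>i<length gs. eval (gs ! i) xs (ys ! i))
             \<Longrightarrow> eval f ys z \<Longrightarrow> eval (Cn f gs) xs z"
| eval_Pr0: "eval f xs y \<Longrightarrow> eval (Pr f g) (0 # xs) y"
| eval_PrS: "eval (Pr f g) (n # xs) y \<Longrightarrow> eval g (n # y # xs) z
             \<Longrightarrow> eval (Pr f g) (Suc n # xs) z"
| eval_Mn: "eval f (y # xs) 0 \<Longrightarrow> (\<forall>z<y. \<exists>v. v \<noteq> 0 \<and> eval f (z # xs) v)
             \<Longrightarrow> eval (Mn f) xs y"

definition ce_set :: "nat set \<Rightarrow> bool" where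
  "ce_set A \<longleftrightarrow> (\<exists>c. \<forall>x. x \<in> A \<longleftrightarrow> (\<exists>y. eval c [x] y))"

definition ce_rel :: "nat set \<Rightarrow> (nat \<Rightarrow> nat \<Rightarrow> bool) \<Rightarrow> bool" where
  "ce_rel S R \<longleftrightarrow> ce_set {prod_encode (a, b) | a b. a \<in> S \<and> b \<in> S \<and> R a b}"

definition computable_on :: "nat set \<Rightarrow> (nat \<Rightarrow> nat) \<Rightarrow> bool" where
  "computable_on X f \<longleftrightarrow> (\<exists>c. \<forall>x\<in>X. eval c [x] (f x))"

text \<open>Preimages of basic opens [n]_T under h are uniformly c.e. unions of basic opens of S.\<close>
definition ce_preimages ::
  "nat set \<Rightarrow> (nat \<Rightarrow> nat \<Rightarrow> bool) \<Rightarrow> nat set \<Rightarrow> (nat \<Rightarrow> nat \<Rightarrow> bool)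
     \<Rightarrow> (nat set \<Rightarrow> nat set) \<Rightarrow> bool" where
  "ce_preimages S R T Q h \<longleftrightarrow>
     (\<exists>W. ce_set W \<and>
        (\<forall>n. {I \<in> topspace (ideal_space S R). h I \<in> basic_open T Q n}
             = (\<Union>{basic_open S R m | m. prod_encode (n, m) \<in> W})))"

definition computable_homeo ::
  "nat set \<Rightarrow> (nat \<Rightarrow> nat \<Rightarrow> bool) \<Rightarrow> nat set \<Rightarrow> (nat \<Rightarrow> nat \<Rightarrow> bool)
     \<Rightarrow> (nat set \<Rightarrow> nat set) \<Rightarrow> bool" where
  "computable_homeo S R T Q h \<longleftrightarrow>
     homeomorphic_map (ideal_space S R) (ideal_space T Q) h \<and>
     ce_preimages S R T Q h \<and>
     ce_preimages T Q S R (inv_into (topspace (ideal_space S R)) h)"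

end

(* The homeomorphism is I \<mapsto> f ` I, with inverse J \<mapsto> {x \<in> X. f x \<in> J}. Since f reflects the
   relations, two points in the same fibre of f have the same successors, so a directed lower set
   is saturated under the fibres of f; this makes the two maps mutually inverse.

   The preimage of [n] under the first map is the union of the [m] with f m = n; the preimage of
   [m] under the inverse is [f m] when m \<in> X and empty otherwise. Since X need not be c.e., the
   latter is rewritten as the union of the [f m'] with m \<prec>\<^sub>X m', which is enumerable from
   the c.e. relation \<prec>\<^sub>X. Enumerating such existentially defined sets requires dovetailing:
   evaluation of partial recursive programs with a clock bounding all \<mu>-searches is itself
   computed by a total program. *)

theory Submission
  imports Defs
begin

section \<open>Partial recursive functions\<close>

lemma eval_det: "eval p xs y \<Longrightarrow> eval p xs y' \<Longrightarrow> y = y'"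
proof (induction arbitrary: y' rule: eval.induct)
  case eval_Zero
  from eval_Zero.prems show ?case by (cases rule: eval.cases) simp
next
  case eval_Succ
  from eval_Succ.prems show ?case by (cases rule: eval.cases) auto
next
  case eval_Proj
  from eval_Proj.prems show ?case by (cases rule: eval.cases) auto
next
  case (eval_Cn ys gs xs f z)
  from eval_Cn.prems show ?case
  proof (cases rule: eval.cases)
    case (eval_Cn ys')
    have "ys' = ys"
      by (rule nth_equalityI) (use eval_Cn eval_Cn.hyps(1) eval_Cn.IH(1) in auto)
    then show ?thesis using eval_Cn eval_Cn.IH by auto
  qed
next
  case eval_Pr0
  from eval_Pr0.prems show ?case by (cases rule: eval.cases) (use eval_Pr0 in auto)
next
  case eval_PrS
  from eval_PrS.prems show ?case by (cases rule: eval.cases) (use eval_PrS in auto)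
next
  case (eval_Mn f y xs)
  from eval_Mn.prems show ?case
  proof (cases rule: eval.cases)
    case Mn': eval_Mn
    show ?thesis
    proof (rule linorder_cases)
      assume "y < y'"
      then show ?thesis using Mn' eval_Mn.IH(1) by fastforce
    next
      assume "y' < y"
      then show ?thesis using Mn' eval_Mn.IH(2) by fastforce
    qed
  qed
qed

lemma eval_CnI: "list_all2 (\<lambda>g y. eval g xs y) gs ys \<Longrightarrow> eval f ys z \<Longrightarrow> eval (Cn f gs) xs z"
  by (rule eval_Cn) (auto simp: list_all2_conv_all_nth)

lemma eval_PrI:
  "eval F xs (r 0) \<Longrightarrow> (\<And>i. i < n \<Longrightarrow> eval G (i # r i # xs) (r (Suc i)))
    \<Longrightarrow> eval (Pr F G) (n # xs) (r n)"
  by (induction n) (auto intro: eval_Pr0 eval_PrS)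

lemma eval_ProjI: "i < length xs \<Longrightarrow> v = xs ! i \<Longrightarrow> eval (Proj i) xs v"
  using eval_Proj by simp

lemma eval_SuccI: "v = Suc x \<Longrightarrow> eval Succ (x # xs) v"
  using eval_Succ by simp

primrec const_prog :: "nat \<Rightarrow> recf" where
  "const_prog 0 = Zero"
| "const_prog (Suc n) = Cn Succ [const_prog n]"

lemma eval_const_prog: "eval (const_prog n) xs n"
  by (induction n) (auto intro!: eval_Zero eval_CnI eval_SuccI)

definition "pred_prog = Pr Zero (Proj 0)"

lemma eval_pred_prog: "eval pred_prog (n # xs) (n - 1)"
  unfolding pred_prog_def
  by (rule eval_PrI[where r = "\<lambda>n. n - 1"]) (auto intro: eval_Zero eval_ProjI)

definition "add_prog = Pr (Proj 0) (Cn Succ [Proj 1])"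

lemma eval_add_prog: "eval add_prog (n # m # xs) (n + m)"
  unfolding add_prog_def
  by (rule eval_PrI[where r = "\<lambda>n. n + m"]) (auto intro!: eval_ProjI eval_CnI eval_SuccI)

definition "diff_prog = Pr (Proj 0) (Cn pred_prog [Proj 1])"

lemma eval_diff_prog: "eval diff_prog (n # m # xs) (m - n)"
proof -
  have "eval pred_prog [m - i] (m - Suc i)" for i
    using eval_pred_prog[of "m - i" "[]"] by simp
  then show ?thesis
    unfolding diff_prog_def
    by (intro eval_PrI[where r = "\<lambda>n. m - n"]) (auto intro!: eval_ProjI eval_CnI)
qed

definition "mult_prog = Pr Zero (Cn add_prog [Proj 1, Proj 2])"

lemma eval_mult_prog: "eval mult_prog (n # m # xs) (n * m)"
proof -
  have "eval (Cn add_prog [Proj 1, Proj 2]) (i # i * m # m # xs) (Suc i * m)" for i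
    using eval_add_prog[of "i * m" m "[]"]
    by (intro eval_CnI[where ys = "[i * m, m]"]) (auto simp: add.commute intro: eval_ProjI)
  then show ?thesis
    unfolding mult_prog_def by (intro eval_PrI[where r = "\<lambda>n. n * m"]) (auto intro: eval_Zero)
qed

section \<open>Evaluation with a clock\<close>

definition option_code :: "nat option \<Rightarrow> nat" where
  "option_code r = (case r of None \<Rightarrow> 0 | Some v \<Rightarrow> Suc v)"

lemma option_code_simps [simp]: "option_code None = 0" "option_code (Some v) = Suc v"
  by (simp_all add: option_code_def)

lemma option_code_eq_0_iff [simp]: "option_code r = 0 \<longleftrightarrow> r = None"
  by (cases r) simp_all

lemma option_code_eq_Suc_iff [simp]: "option_code r = Suc v \<longleftrightarrow> r = Some v"
  by (cases r) simp_all

primrec pr_iterate :: "(nat \<Rightarrow> nat \<Rightarrow> nat option) \<Rightarrow> nat option \<Rightarrow> nat \<Rightarrow> nat option" where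
  "pr_iterate G r 0 = r"
| "pr_iterate G r (Suc i) = Option.bind (pr_iterate G r i) (G i)"

text \<open>The state of a \<open>\<mu>\<close>-search for a zero of the partial function \<open>F\<close> after inspecting the
  arguments below \<open>i\<close>: \<open>1\<close> while all values met are defined and nonzero, \<open>y + 2\<close> once the
  least zero \<open>y\<close> has been found, and \<open>0\<close> once an undefined value has been met. The second
  argument of \<open>search_step\<close> is the \<open>option_code\<close> of \<open>F i\<close>.\<close>

definition search_step :: "nat \<Rightarrow> nat \<Rightarrow> nat \<Rightarrow> nat" where
  "search_step s r i = (if s = 1 then (if r = 0 then 0 else if r = 1 then i + 2 else 1) else s)"

primrec search_state :: "(nat \<Rightarrow> nat option) \<Rightarrow> nat \<Rightarrow> nat" where
  "search_state F 0 = 1"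
| "search_state F (Suc i) = search_step (search_state F i) (option_code (F i)) i"

lemma search_state_sound:
  "(search_state F k = 1 \<longrightarrow> (\<forall>z<k. \<exists>v. v \<noteq> 0 \<and> F z = Some v)) \<and>
   (2 \<le> search_state F k \<longrightarrow> search_state F k - 2 < k \<and> F (search_state F k - 2) = Some 0 \<and>
      (\<forall>z < search_state F k - 2. \<exists>v. v \<noteq> 0 \<and> F z = Some v))"
proof (induction k)
  case (Suc k)
  then show ?case
    by (cases "search_state F k = 1"; cases "F k") (auto simp: search_step_def less_Suc_eq)
qed simp

lemma search_state_found:
  assumes "F y = Some 0" and "\<forall>z<y. \<exists>v. v \<noteq> 0 \<and> F z = Some v" and "y < k"
  shows "search_state F k = y + 2"
proof -
  have searching: "search_state F z = 1" if "z \<le> y" for z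
    using that
  proof (induction z)
    case (Suc z)
    then obtain v where "v \<noteq> 0" "F z = Some v" using assms(2) Suc.prems Suc_le_lessD by blast
    with Suc show ?case by (simp add: search_step_def)
  qed simp
  show ?thesis
    using \<open>y < k\<close>
  proof (induction k)
    case (Suc k)
    then show ?case
      using searching[of y] assms(1) by (cases "y = k") (auto simp: search_step_def)
  qed simp
qed

text \<open>The clock \<open>k\<close> bounds the \<open>\<mu>\<close>-searches, the only source of divergence.\<close>

primrec bounded_eval :: "recf \<Rightarrow> nat \<Rightarrow> nat list \<Rightarrow> nat option" where
  "bounded_eval Zero k xs = Some 0"
| "bounded_eval Succ k xs = (case xs of [] \<Rightarrow> None | x # _ \<Rightarrow> Some (Suc x))"
| "bounded_eval (Proj i) k xs = (if i < length xs then Some (xs ! i) else None)"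
| "bounded_eval (Cn f gs) k xs = (let rs = map (\<lambda>g. bounded_eval g k xs) gs in
      if None \<in> set rs then None else bounded_eval f k (map the rs))"
| "bounded_eval (Pr f g) k xs = (case xs of [] \<Rightarrow> None
      | n # ys \<Rightarrow> pr_iterate (\<lambda>i y. bounded_eval g k (i # y # ys)) (bounded_eval f k ys) n)"
| "bounded_eval (Mn f) k xs = (let s = search_state (\<lambda>y. bounded_eval f k (y # xs)) k in
      if 2 \<le> s then Some (s - 2) else None)"

lemma bounded_eval_Cn:
  "bounded_eval (Cn f gs) k xs = (if \<exists>g\<in>set gs. bounded_eval g k xs = None then None
     else bounded_eval f k (map (\<lambda>g. the (bounded_eval g k xs)) gs))"
  by (auto simp: Let_def image_iff eq_commute comp_def)

declare bounded_eval.simps(4) [simp del]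

lemma bounded_eval_sound: "bounded_eval p k xs = Some v \<Longrightarrow> eval p xs v"
proof (induction p arbitrary: xs v)
  case (Cn f gs)
  then show ?case
    by (auto simp: bounded_eval_Cn split: if_splits intro!: eval_CnI[OF _ Cn.IH(1)])
      (auto simp: list_all2_conv_all_nth intro!: Cn.IH(2))
next
  case (Pr f g)
  then obtain n ys where xs: "xs = n # ys" by (cases xs) auto
  have "pr_iterate (\<lambda>i y. bounded_eval g k (i # y # ys)) (bounded_eval f k ys) n = Some v
      \<Longrightarrow> eval (Pr f g) (n # ys) v" for v
    by (induction n arbitrary: v) (auto simp: bind_eq_Some_conv intro: eval_Pr0 eval_PrS Pr.IH)
  then show ?case using Pr.prems xs by simp
next
  case (Mn f)
  let ?F = "\<lambda>y. bounded_eval f k (y # xs)"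
  have "2 \<le> search_state ?F k" "v = search_state ?F k - 2"
    using Mn.prems by (auto simp: Let_def split: if_splits)
  then show ?case
    using search_state_sound[of ?F k] by (auto intro!: eval_Mn Mn.IH)
qed (auto intro: eval.intros split: list.splits if_splits)

lemma eventually_bounded_eval: "eval p xs v \<Longrightarrow> \<forall>\<^sub>F k in sequentially. bounded_eval p k xs = Some v"
proof (induction rule: eval.induct)
  case (eval_Cn ys gs xs f z)
  have "\<forall>\<^sub>F k in sequentially. \<forall>i\<in>{..<length gs}. bounded_eval (gs ! i) k xs = Some (ys ! i)"
    using eval_Cn.IH(1) by (intro eventually_ball_finite) auto
  then have "\<forall>\<^sub>F k in sequentially. map (\<lambda>g. the (bounded_eval g k xs)) gs = ys
      \<and> \<not> (\<exists>g\<in>set gs. bounded_eval g k xs = None)"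
    by eventually_elim (auto simp: eval_Cn.hyps(1) in_set_conv_nth intro!: nth_equalityI)
  with eval_Cn.IH(2) show ?case
    by eventually_elim (simp add: bounded_eval_Cn)
next
  case (eval_PrS f g n xs y z)
  from eval_PrS.IH show ?case
    by eventually_elim simp
next
  case (eval_Mn f y xs)
  have "\<forall>\<^sub>F k in sequentially. \<exists>v. v \<noteq> 0 \<and> bounded_eval f k (z # xs) = Some v" if "z < y" for z
  proof -
    obtain v where "v \<noteq> 0" "\<forall>\<^sub>F k in sequentially. bounded_eval f k (z # xs) = Some v"
      using eval_Mn.IH(2) \<open>z < y\<close> by blast
    then show ?thesis by (auto elim: eventually_mono)
  qed
  then have "\<forall>\<^sub>F k in sequentially. \<forall>z\<in>{..<y}. \<exists>v. v \<noteq> 0 \<and> bounded_eval f k (z # xs) = Some v"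
    by (intro eventually_ball_finite) auto
  with eval_Mn.IH(1) eventually_gt_at_top[of y] show ?case
    by eventually_elim (simp add: Let_def search_state_found)
qed auto

section \<open>Arithmetic expressions compiled to programs\<close>

text \<open>\<open>Call p F es\<close> applies the program \<open>p\<close>; the function \<open>F\<close> is its intended meaning, and
  \<open>wf_aexp\<close> demands that \<open>p\<close> computes \<open>F\<close> totally.\<close>

datatype aexp = V nat | K nat | Plus aexp aexp | Minus aexp aexp | Times aexp aexp
  | Call recf "nat list \<Rightarrow> nat" "aexp list"

primrec aval :: "aexp \<Rightarrow> nat list \<Rightarrow> nat" where
  "aval (V i) xs = xs ! i"
| "aval (K n) xs = n"
| "aval (Plus a b) xs = aval a xs + aval b xs"
| "aval (Minus a b) xs = aval a xs - aval b xs"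
| "aval (Times a b) xs = aval a xs * aval b xs"
| "aval (Call p F es) xs = F (map (\<lambda>e. aval e xs) es)"

primrec wf_aexp :: "aexp \<Rightarrow> nat \<Rightarrow> bool" where
  "wf_aexp (V i) n = (i < n)"
| "wf_aexp (K m) n = True"
| "wf_aexp (Plus a b) n = (wf_aexp a n \<and> wf_aexp b n)"
| "wf_aexp (Minus a b) n = (wf_aexp a n \<and> wf_aexp b n)"
| "wf_aexp (Times a b) n = (wf_aexp a n \<and> wf_aexp b n)"
| "wf_aexp (Call p F es) n = ((\<forall>ys. length ys = length es \<longrightarrow> eval p ys (F ys)) \<and>
      list_all (\<lambda>e. wf_aexp e n) es)"

lemma wf_aexp_Call [simp]: "wf_aexp (Call p F es) n \<longleftrightarrow>
    (\<forall>ys. length ys = length es \<longrightarrow> eval p ys (F ys)) \<and> (\<forall>e\<in>set es. wf_aexp e n)"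
  by (simp add: list_all_iff)

declare wf_aexp.simps(6) [simp del]

primrec acomp :: "aexp \<Rightarrow> recf" where
  "acomp (V i) = Proj i"
| "acomp (K n) = const_prog n"
| "acomp (Plus a b) = Cn add_prog [acomp a, acomp b]"
| "acomp (Minus a b) = Cn diff_prog [acomp b, acomp a]"
| "acomp (Times a b) = Cn mult_prog [acomp a, acomp b]"
| "acomp (Call p F es) = Cn p (map acomp es)"

lemma eval_acomp: "wf_aexp e (length xs) \<Longrightarrow> eval (acomp e) xs (aval e xs)"
proof (induction e)
  case (Plus a b)
  then show ?case
    by (auto intro!: eval_CnI[where ys = "[aval a xs, aval b xs]"]
        eval_add_prog[of _ _ "[]", simplified])
next
  case (Minus a b)
  then show ?case
    by (auto intro!: eval_CnI[where ys = "[aval b xs, aval a xs]"]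
        eval_diff_prog[of _ _ "[]", simplified])
next
  case (Times a b)
  then show ?case
    by (auto intro!: eval_CnI[where ys = "[aval a xs, aval b xs]"]
        eval_mult_prog[of _ _ "[]", simplified])
next
  case (Call p F es)
  then show ?case
    by (auto simp: list_all2_conv_all_nth intro!: eval_CnI[where ys = "map (\<lambda>e. aval e xs) es"])
qed (auto intro: eval_ProjI eval_const_prog)

lemma eval_Pr_acomp:
  assumes "eval F xs (r 0)" and "wf_aexp G (length xs + 2)"
    and "\<And>i. aval G (i # r i # xs) = r (Suc i)"
  shows "eval (Pr F (acomp G)) (n # xs) (r n)"
proof (rule eval_PrI)
  fix i
  have "eval (acomp G) (i # r i # xs) (aval G (i # r i # xs))"
    using assms(2) by (intro eval_acomp) simp
  then show "eval (acomp G) (i # r i # xs) (r (Suc i))"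
    using assms(3) by simp
qed (rule assms(1))

definition vars :: "nat \<Rightarrow> nat \<Rightarrow> aexp list" where
  "vars i j = map V [i..<j]"

lemma map_aval_vars: "j = length xs \<Longrightarrow> map (\<lambda>e. aval e xs) (vars i j) = drop i xs"
  by (auto simp: vars_def intro: nth_equalityI)

lemma wf_aexp_vars: "e \<in> set (vars i j) \<Longrightarrow> j \<le> n \<Longrightarrow> wf_aexp e n"
  by (auto simp: vars_def)

lemma length_vars [simp]: "length (vars i j) = j - i"
  by (simp add: vars_def)

definition Sgn :: "aexp \<Rightarrow> aexp" where
  "Sgn x = Minus (K 1) (Minus (K 1) x)"

lemma aval_Sgn [simp]: "aval (Sgn x) xs = (if aval x xs = 0 then 0 else 1)"
  by (simp add: Sgn_def)

lemma wf_aexp_Sgn [simp]: "wf_aexp (Sgn x) n = wf_aexp x n"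
  by (simp add: Sgn_def)

definition IsOne :: "aexp \<Rightarrow> aexp" where
  "IsOne x = Times (Minus (K 1) (Minus x (K 1))) (Sgn x)"

lemma aval_IsOne [simp]: "aval (IsOne x) xs = (if aval x xs = 1 then 1 else 0)"
  by (cases "aval x xs") (auto simp: IsOne_def)

lemma wf_aexp_IsOne [simp]: "wf_aexp (IsOne x) n = wf_aexp x n"
  by (simp add: IsOne_def)

primrec AllPos :: "aexp list \<Rightarrow> aexp" where
  "AllPos [] = K 1"
| "AllPos (e # es) = Times (Sgn e) (AllPos es)"

lemma aval_AllPos: "aval (AllPos es) xs = (if \<forall>e\<in>set es. aval e xs \<noteq> 0 then 1 else 0)"
  by (induction es) auto

lemma wf_aexp_AllPos [simp]: "wf_aexp (AllPos es) n = (\<forall>e\<in>set es. wf_aexp e n)"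
  by (induction es) auto

definition SearchStep :: "aexp \<Rightarrow> aexp \<Rightarrow> aexp \<Rightarrow> aexp" where
  "SearchStep s r i = Plus
     (Times (IsOne s) (Times (Sgn r) (Plus (Times (IsOne r) (Plus i (K 2))) (Minus (K 1) (IsOne r)))))
     (Times (Minus (K 1) (IsOne s)) s)"

lemma aval_SearchStep [simp]:
  "aval (SearchStep s r i) xs = search_step (aval s xs) (aval r xs) (aval i xs)"
  by (simp add: SearchStep_def search_step_def)

lemma wf_aexp_SearchStep [simp]:
  "wf_aexp (SearchStep s r i) n = (wf_aexp s n \<and> wf_aexp r n \<and> wf_aexp i n)"
  by (auto simp: SearchStep_def)

section \<open>Clocked evaluation is recursive\<close>

definition bounded_eval_code :: "recf \<Rightarrow> nat list \<Rightarrow> nat" where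
  "bounded_eval_code p ys = option_code (bounded_eval p (hd ys) (tl ys))"

text \<open>\<open>clock_prog a p\<close> expects the clock followed by \<open>a\<close> arguments. Primitive recursion and
  \<open>\<mu>\<close>-search are simulated by \<open>Pr\<close> programs iterating \<open>pr_iterate\<close> resp. \<open>search_step\<close>;
  the \<open>Call\<close>s of these programs record the iterated function as their meaning.\<close>

fun clock_prog :: "nat \<Rightarrow> recf \<Rightarrow> recf" where
  "clock_prog a Zero = acomp (K 1)"
| "clock_prog a Succ = (if a = 0 then Zero else acomp (Plus (V 1) (K 2)))"
| "clock_prog a (Proj i) = (if i < a then acomp (Plus (V (Suc i)) (K 1)) else Zero)"
| "clock_prog a (Cn f gs) =
     acomp (Times (AllPos (map (\<lambda>g. Call (clock_prog a g) (bounded_eval_code g) (vars 0 (Suc a))) gs))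
       (Call (clock_prog (length gs) f) (bounded_eval_code f)
          (V 0 # map (\<lambda>g. Minus (Call (clock_prog a g) (bounded_eval_code g) (vars 0 (Suc a))) (K 1))
            gs)))"
| "clock_prog a (Pr f g) = (if a = 0 then Zero else acomp (Call
     (Pr (clock_prog (a - 1) f) (acomp (Times (Sgn (V 1))
        (Call (clock_prog (Suc a) g) (bounded_eval_code g)
          (V 2 # V 0 # Minus (V 1) (K 1) # vars 3 (a + 2))))))
     (\<lambda>l. option_code (pr_iterate (\<lambda>i y. bounded_eval g (l ! 1) (i # y # drop 2 l))
        (bounded_eval f (l ! 1) (drop 2 l)) (l ! 0)))
     (V 1 # V 0 # vars 2 (Suc a))))"
| "clock_prog a (Mn f) = acomp (Minus (Call
     (Pr (acomp (K 1)) (acomp (SearchStep (V 1)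
        (Call (clock_prog (Suc a) f) (bounded_eval_code f) (V 2 # V 0 # vars 3 (a + 3))) (V 0))))
     (\<lambda>l. search_state (\<lambda>y. bounded_eval f (l ! 1) (y # drop 2 l)) (l ! 0))
     (V 0 # vars 0 (Suc a))) (K 1))"

declare clock_prog.simps [simp del]

lemma eval_clock_prog_Cn:
  assumes f: "\<And>ys. length ys = Suc (length gs) \<Longrightarrow>
      eval (clock_prog (length gs) f) ys (bounded_eval_code f ys)"
    and gs: "\<And>g ys. g \<in> set gs \<Longrightarrow> length ys = Suc a \<Longrightarrow>
      eval (clock_prog a g) ys (bounded_eval_code g ys)"
    and "length xs = a"
  shows "eval (clock_prog a (Cn f gs)) (k # xs) (bounded_eval_code (Cn f gs) (k # xs))"
proof -
  define G where "G = (\<lambda>g. Call (clock_prog a g) (bounded_eval_code g) (vars 0 (Suc a)))"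
  define e where "e = Times (AllPos (map G gs))
     (Call (clock_prog (length gs) f) (bounded_eval_code f) (V 0 # map (\<lambda>g. Minus (G g) (K 1)) gs))"
  have prog: "clock_prog a (Cn f gs) = acomp e"
    by (simp add: e_def G_def clock_prog.simps)
  have aval_G: "aval (G g) (k # xs) = option_code (bounded_eval g k xs)" for g
    using \<open>length xs = a\<close> by (simp add: G_def map_aval_vars bounded_eval_code_def)
  have "wf_aexp e (length (k # xs))"
    using gs f \<open>length xs = a\<close> by (auto simp: e_def G_def wf_aexp_vars)
  then have "eval (clock_prog a (Cn f gs)) (k # xs) (aval e (k # xs))"
    unfolding prog by (rule eval_acomp)
  moreover have "aval e (k # xs) = bounded_eval_code (Cn f gs) (k # xs)"
  proof (cases "\<exists>g\<in>set gs. bounded_eval g k xs = None")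
    case True
    then show ?thesis by (auto simp: e_def aval_AllPos aval_G bounded_eval_Cn bounded_eval_code_def)
  next
    case False
    then have "map (\<lambda>g. option_code (bounded_eval g k xs) - 1) gs =
        map (\<lambda>g. the (bounded_eval g k xs)) gs"
      by auto
    with False show ?thesis
      by (auto simp: e_def aval_AllPos aval_G bounded_eval_Cn bounded_eval_code_def comp_def
          simp del: map_eq_conv)
  qed
  ultimately show ?thesis by simp
qed

lemma eval_clock_prog_Pr:
  assumes f: "\<And>ys. length ys = Suc b \<Longrightarrow> eval (clock_prog b f) ys (bounded_eval_code f ys)"
    and g: "\<And>ys. length ys = Suc (Suc (Suc b)) \<Longrightarrow>
      eval (clock_prog (Suc (Suc b)) g) ys (bounded_eval_code g ys)"
    and "length xs = Suc b"
  shows "eval (clock_prog (Suc b) (Pr f g)) (k # xs) (bounded_eval_code (Pr f g) (k # xs))"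
proof -
  define step where "step = Times (Sgn (V 1))
    (Call (clock_prog (Suc (Suc b)) g) (bounded_eval_code g)
      (V 2 # V 0 # Minus (V 1) (K 1) # vars 3 (b + 3)))"
  define iter where "iter = (\<lambda>l. option_code
    (pr_iterate (\<lambda>i y. bounded_eval g (l ! 1) (i # y # drop 2 l)) (bounded_eval f (l ! 1) (drop 2 l)) (l ! 0)))"
  define P where "P = Pr (clock_prog b f) (acomp step)"
  define e where "e = Call P iter (V 1 # V 0 # vars 2 (Suc (Suc b)))"
  have prog: "clock_prog (Suc b) (Pr f g) = acomp e"
    by (simp add: e_def P_def step_def iter_def numeral_eq_Suc clock_prog.simps)
  have eval_P: "eval P l (iter l)" if "length l = Suc (Suc b)" for l
  proof -
    from that obtain n k' zs where l: "l = n # k' # zs" "length zs = b"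
      by (auto simp: length_Suc_conv)
    define r where "r = (\<lambda>i. option_code (pr_iterate (\<lambda>i y. bounded_eval g k' (i # y # zs))
      (bounded_eval f k' zs) i))"
    have "eval P (n # k' # zs) (r n)"
      unfolding P_def
    proof (rule eval_Pr_acomp)
      show "eval (clock_prog b f) (k' # zs) (r 0)"
        using f[of "k' # zs"] l by (simp add: r_def bounded_eval_code_def)
      show "wf_aexp step (length (k' # zs) + 2)"
        using g l by (auto simp: step_def wf_aexp_vars)
      show "aval step (i # r i # k' # zs) = r (Suc i)" for i
        using l by (cases "pr_iterate (\<lambda>i y. bounded_eval g k' (i # y # zs)) (bounded_eval f k' zs) i")
          (auto simp: step_def r_def map_aval_vars bounded_eval_code_def)
    qed
    then show ?thesis using l by (simp add: iter_def r_def)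
  qed
  then have "wf_aexp e (length (k # xs))"
    using \<open>length xs = Suc b\<close> by (auto simp: e_def wf_aexp_vars)
  then have "eval (clock_prog (Suc b) (Pr f g)) (k # xs) (aval e (k # xs))"
    unfolding prog by (rule eval_acomp)
  moreover obtain n zs where "xs = n # zs"
    using \<open>length xs = Suc b\<close> by (cases xs) auto
  ultimately show ?thesis
    using \<open>length xs = Suc b\<close> by (simp add: e_def iter_def map_aval_vars bounded_eval_code_def)
qed

lemma eval_clock_prog_Mn:
  assumes f: "\<And>ys. length ys = Suc (Suc a) \<Longrightarrow> eval (clock_prog (Suc a) f) ys (bounded_eval_code f ys)"
    and "length xs = a"
  shows "eval (clock_prog a (Mn f)) (k # xs) (bounded_eval_code (Mn f) (k # xs))"
proof -
  define step where "step = SearchStep (V 1)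
    (Call (clock_prog (Suc a) f) (bounded_eval_code f) (V 2 # V 0 # vars 3 (a + 3))) (V 0)"
  define search where "search = (\<lambda>l. search_state (\<lambda>y. bounded_eval f (l ! 1) (y # drop 2 l)) (l ! 0))"
  define P where "P = Pr (acomp (K 1)) (acomp step)"
  define e where "e = Minus (Call P search (V 0 # vars 0 (Suc a))) (K 1)"
  have prog: "clock_prog a (Mn f) = acomp e"
    by (simp add: e_def P_def step_def search_def clock_prog.simps)
  have eval_P: "eval P l (search l)" if "length l = Suc (Suc a)" for l
  proof -
    from that obtain n k' zs where l: "l = n # k' # zs" "length zs = a"
      by (auto simp: length_Suc_conv)
    have "eval P (n # k' # zs) (search_state (\<lambda>y. bounded_eval f k' (y # zs)) n)"
      unfolding P_def
    proof (rule eval_Pr_acomp)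
      show "eval (acomp (K 1)) (k' # zs) (search_state (\<lambda>y. bounded_eval f k' (y # zs)) 0)"
        using eval_acomp[of "K 1" "k' # zs"] by simp
    qed (use f l in \<open>auto simp: step_def wf_aexp_vars map_aval_vars bounded_eval_code_def\<close>)
    then show ?thesis using l by (simp add: search_def)
  qed
  then have "wf_aexp e (length (k # xs))"
    using \<open>length xs = a\<close> by (auto simp: e_def wf_aexp_vars)
  then have "eval (clock_prog a (Mn f)) (k # xs) (aval e (k # xs))"
    unfolding prog by (rule eval_acomp)
  moreover have "search (k # k # xs) - 1 = bounded_eval_code (Mn f) (k # xs)"
    by (auto simp: search_def Let_def bounded_eval_code_def)
  ultimately show ?thesis
    using \<open>length xs = a\<close> by (simp add: e_def map_aval_vars)
qed

lemma eval_clock_prog: "length ys = Suc a \<Longrightarrow> eval (clock_prog a p) ys (bounded_eval_code p ys)"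
proof (induction p arbitrary: a ys)
  case Zero
  have "eval (acomp (K 1)) ys (aval (K 1) ys)"
    by (rule eval_acomp) simp
  then show ?case
    by (simp add: clock_prog.simps bounded_eval_code_def)
next
  case Succ
  have "eval (acomp (Plus (V 1) (K 2))) ys (aval (Plus (V 1) (K 2)) ys)" if "a \<noteq> 0"
    using that Succ by (intro eval_acomp) simp
  with Succ show ?case
    by (auto simp: clock_prog.simps bounded_eval_code_def length_Suc_conv eval_Zero split: list.split)
next
  case (Proj i)
  have "eval (acomp (Plus (V (Suc i)) (K 1))) ys (aval (Plus (V (Suc i)) (K 1)) ys)" if "i < a"
    using that Proj by (intro eval_acomp) simp
  with Proj show ?case
    by (auto simp: clock_prog.simps bounded_eval_code_def length_Suc_conv eval_Zero)
next
  case (Cn f gs)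
  then obtain k xs where "ys = k # xs" "length xs = a"
    by (auto simp: length_Suc_conv)
  with Cn.IH show ?case
    by (blast intro: eval_clock_prog_Cn)
next
  case (Pr f g)
  then obtain k xs where ys: "ys = k # xs" "length xs = a"
    by (auto simp: length_Suc_conv)
  show ?case
  proof (cases a)
    case 0
    with ys show ?thesis by (simp add: clock_prog.simps bounded_eval_code_def eval_Zero)
  next
    case (Suc b)
    then show ?thesis
      using eval_clock_prog_Pr[OF Pr.IH, of b xs k] ys by simp
  qed
next
  case (Mn f)
  then obtain k xs where "ys = k # xs" "length xs = a"
    by (auto simp: length_Suc_conv)
  with Mn.IH show ?case
    by (blast intro: eval_clock_prog_Mn)
qed

section \<open>Computably enumerable sets\<close>

definition BoundedEval :: "recf \<Rightarrow> aexp \<Rightarrow> aexp \<Rightarrow> aexp" where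
  "BoundedEval p t x = Call (clock_prog 1 p) (bounded_eval_code p) [t, x]"

lemma aval_BoundedEval [simp]:
  "aval (BoundedEval p t x) xs = option_code (bounded_eval p (aval t xs) [aval x xs])"
  by (simp add: BoundedEval_def bounded_eval_code_def)

lemma wf_aexp_BoundedEval [simp]: "wf_aexp (BoundedEval p t x) n = (wf_aexp t n \<and> wf_aexp x n)"
  by (simp add: BoundedEval_def eval_clock_prog)

definition "tri_prog = Pr Zero (acomp (Plus (V 1) (Plus (V 0) (K 1))))"

lemma eval_tri_prog: "eval tri_prog (n # xs) (triangle n)"
  unfolding tri_prog_def by (rule eval_Pr_acomp) (auto intro: eval_Zero)

definition Tri :: "aexp \<Rightarrow> aexp" where
  "Tri e = Call tri_prog (\<lambda>l. triangle (hd l)) [e]"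

lemma aval_Tri [simp]: "aval (Tri e) xs = triangle (aval e xs)"
  by (simp add: Tri_def)

lemma wf_aexp_Tri [simp]: "wf_aexp (Tri e) n = wf_aexp e n"
  by (auto simp: Tri_def length_Suc_conv eval_tri_prog)

primrec tri_root :: "nat \<Rightarrow> nat" where
  "tri_root 0 = 0"
| "tri_root (Suc x) = tri_root x + (1 - (triangle (tri_root x + 1) - Suc x))"

lemma tri_root_bounds: "triangle (tri_root x) \<le> x \<and> x < triangle (Suc (tri_root x))"
proof (induction x)
  case (Suc x)
  then show ?case
    by (cases "triangle (tri_root x + 1) \<le> Suc x") auto
qed simp

lemma prod_decode_tri_root:
  "prod_decode x = (x - triangle (tri_root x), tri_root x - (x - triangle (tri_root x)))"
proof -
  define s m where "s = tri_root x" and "m = x - triangle s"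
  have "x = triangle s + m" "m \<le> s"
    using tri_root_bounds[of x] by (auto simp: s_def m_def)
  then have "prod_decode x = prod_decode_aux s m"
    using prod_decode_triangle_add by simp
  also have "\<dots> = (m, s - m)"
    using \<open>m \<le> s\<close> by (subst prod_decode_aux.simps) simp
  finally show ?thesis by (simp add: s_def m_def)
qed

definition "tri_root_prog =
  Pr Zero (acomp (Plus (V 1) (Minus (K 1) (Minus (Tri (Plus (V 1) (K 1))) (Plus (V 0) (K 1))))))"

lemma eval_tri_root_prog: "eval tri_root_prog (n # xs) (tri_root n)"
  unfolding tri_root_prog_def by (rule eval_Pr_acomp) (auto intro: eval_Zero)

definition Fst :: "aexp \<Rightarrow> aexp" where
  "Fst e = Minus e (Tri (Call tri_root_prog (\<lambda>l. tri_root (hd l)) [e]))"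

definition Snd :: "aexp \<Rightarrow> aexp" where
  "Snd e = Minus (Call tri_root_prog (\<lambda>l. tri_root (hd l)) [e]) (Fst e)"

lemma aval_Fst [simp]: "aval (Fst e) xs = fst (prod_decode (aval e xs))"
  by (simp add: Fst_def prod_decode_tri_root)

lemma aval_Snd [simp]: "aval (Snd e) xs = snd (prod_decode (aval e xs))"
  by (simp add: Snd_def Fst_def prod_decode_tri_root)

lemma wf_aexp_Fst [simp]: "wf_aexp (Fst e) n = wf_aexp e n"
  by (auto simp: Fst_def length_Suc_conv eval_tri_root_prog)

lemma wf_aexp_Snd [simp]: "wf_aexp (Snd e) n = wf_aexp e n"
  by (auto simp: Snd_def length_Suc_conv eval_tri_root_prog)

definition Enc :: "aexp \<Rightarrow> aexp \<Rightarrow> aexp" where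
  "Enc a b = Plus (Tri (Plus a b)) a"

lemma aval_Enc [simp]: "aval (Enc a b) xs = prod_encode (aval a xs, aval b xs)"
  by (simp add: Enc_def prod_encode_def)

lemma wf_aexp_Enc [simp]: "wf_aexp (Enc a b) n = (wf_aexp a n \<and> wf_aexp b n)"
  by (auto simp: Enc_def)

definition Dist :: "aexp \<Rightarrow> aexp \<Rightarrow> aexp" where
  "Dist a b = Plus (Minus a b) (Minus b a)"

lemma aval_Dist_eq_0 [simp]: "aval (Dist a b) xs = 0 \<longleftrightarrow> aval a xs = aval b xs"
  by (auto simp: Dist_def)

lemma wf_aexp_Dist [simp]: "wf_aexp (Dist a b) n = (wf_aexp a n \<and> wf_aexp b n)"
  by (auto simp: Dist_def)

lemma ce_set_Ex_aexp:
  assumes "wf_aexp e 2"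
  shows "ce_set {x. \<exists>y. aval e [y, x] = 0}"
proof -
  have eval_e: "eval (acomp e) [y, x] (aval e [y, x])" for y x
    using assms by (intro eval_acomp) (simp add: numeral_2_eq_2)
  have "(\<exists>y. aval e [y, x] = 0) \<longleftrightarrow> (\<exists>r. eval (Mn (acomp e)) [x] r)" for x
  proof
    assume "\<exists>y. aval e [y, x] = 0"
    then have "eval (acomp e) [LEAST y. aval e [y, x] = 0, x] 0"
      using eval_e[of "LEAST y. aval e [y, x] = 0" x] LeastI_ex[of "\<lambda>y. aval e [y, x] = 0"] by simp
    moreover have "\<forall>z < (LEAST y. aval e [y, x] = 0). \<exists>v. v \<noteq> 0 \<and> eval (acomp e) [z, x] v"
      using eval_e not_less_Least by blast
    ultimately have "eval (Mn (acomp e)) [x] (LEAST y. aval e [y, x] = 0)"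
      by (rule eval_Mn)
    then show "\<exists>r. eval (Mn (acomp e)) [x] r" ..
  next
    assume "\<exists>r. eval (Mn (acomp e)) [x] r"
    then obtain r where "eval (acomp e) [r, x] 0"
      by (auto elim: eval.cases)
    then show "\<exists>y. aval e [y, x] = 0"
      using eval_e eval_det by blast
  qed
  then show ?thesis unfolding ce_set_def by blast
qed

lemma eval_iff_bounded_eval: "eval p xs v \<longleftrightarrow> (\<exists>k. bounded_eval p k xs = Some v)"
  using bounded_eval_sound eventually_bounded_eval eventually_happens'[OF sequentially_bot] by blast

lemma Collect_prod_encode: "{x. P x} = {prod_encode (a, b) | a b. P (prod_encode (a, b))}"
  by (auto, metis prod_decode_inverse surj_pair)

lemma ex_prod_encode: "(\<exists>x. P x) \<longleftrightarrow> (\<exists>a b. P (prod_encode (a, b)))"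
  by (metis prod_decode_inverse surj_pair)

lemma ce_set_graph: "ce_set {prod_encode (n, m) | n m. eval p [m] n}"
proof -
  define e where "e = Dist (BoundedEval p (V 0) (Snd (V 1))) (Plus (Fst (V 1)) (K 1))"
  have "{x. \<exists>y. aval e [y, x] = 0} = {prod_encode (n, m) | n m. \<exists>y. aval e [y, prod_encode (n, m)] = 0}"
    by (rule Collect_prod_encode)
  also have "\<dots> = {prod_encode (n, m) | n m. eval p [m] n}"
    by (simp add: e_def eval_iff_bounded_eval)
  finally show ?thesis
    using ce_set_Ex_aexp[of e] by (simp add: e_def numeral_2_eq_2)
qed

lemma ce_set_relcomp_graph:
  assumes "ce_set A"
  shows "ce_set {prod_encode (a, b) | a b. \<exists>c. prod_encode (a, c) \<in> A \<and> eval p [c] b}"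
proof -
  from assms obtain q where q: "x \<in> A \<longleftrightarrow> (\<exists>v. eval q [x] v)" for x
    unfolding ce_set_def by blast
  define e where "e = Plus
    (Minus (K 1) (Sgn (BoundedEval q (Fst (V 0)) (Enc (Fst (V 1)) (Snd (V 0))))))
    (Dist (BoundedEval p (Fst (V 0)) (Snd (V 0))) (Plus (Snd (V 1)) (K 1)))"
  have aval_e: "aval e [prod_encode (t, c), prod_encode (a, b)] = 0 \<longleftrightarrow>
      bounded_eval q t [prod_encode (a, c)] \<noteq> None \<and> bounded_eval p t [c] = Some b" for t c a b
    by (simp add: e_def)
  have witness: "(\<exists>t. bounded_eval q t [prod_encode (a, c)] \<noteq> None \<and> bounded_eval p t [c] = Some b)
      \<longleftrightarrow> prod_encode (a, c) \<in> A \<and> eval p [c] b" for a b c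
  proof
    assume "\<exists>t. bounded_eval q t [prod_encode (a, c)] \<noteq> None \<and> bounded_eval p t [c] = Some b"
    then show "prod_encode (a, c) \<in> A \<and> eval p [c] b"
      using q bounded_eval_sound by blast
  next
    assume "prod_encode (a, c) \<in> A \<and> eval p [c] b"
    then obtain v where "eval q [prod_encode (a, c)] v" "eval p [c] b"
      using q by blast
    then have "\<forall>\<^sub>F t in sequentially.
        bounded_eval q t [prod_encode (a, c)] = Some v \<and> bounded_eval p t [c] = Some b"
      by (intro eventually_conj eventually_bounded_eval)
    then obtain t where "bounded_eval q t [prod_encode (a, c)] = Some v" "bounded_eval p t [c] = Some b"
      unfolding eventually_sequentially by blast
    then show "\<exists>t. bounded_eval q t [prod_encode (a, c)] \<noteq> None \<and> bounded_eval p t [c] = Some b"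
      by auto
  qed
  have "(\<exists>y. aval e [y, prod_encode (a, b)] = 0) \<longleftrightarrow> (\<exists>c. prod_encode (a, c) \<in> A \<and> eval p [c] b)" for a b
    using ex_prod_encode[of "\<lambda>y. aval e [y, prod_encode (a, b)] = 0"] witness unfolding aval_e by blast
  then have "{x. \<exists>y. aval e [y, x] = 0} =
      {prod_encode (a, b) | a b. \<exists>c. prod_encode (a, c) \<in> A \<and> eval p [c] b}"
    by (subst Collect_prod_encode) simp
  then show ?thesis
    using ce_set_Ex_aexp[of e] by (simp add: e_def numeral_2_eq_2)
qed

section \<open>Ideals and the induced homeomorphism\<close>

lemma homeomorphic_maps_inv_into:
  assumes "homeomorphic_maps X Y f g" and "y \<in> topspace Y"
  shows "inv_into (topspace X) f y = g y"
proof (rule inv_into_f_eq)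
  show "inj_on f (topspace X)"
    using assms(1) unfolding homeomorphic_maps_def by (metis inj_on_inverseI)
  show "g y \<in> topspace X" "f (g y) = y"
    using assms unfolding homeomorphic_maps_def continuous_map_def by auto
qed

lemma topspace_ideal_space: "topspace (ideal_space S R) = {I. is_ideal S R I}"
proof -
  have "\<Union>{basic_open S R n | n. n \<in> S} = {I. is_ideal S R I}"
    unfolding basic_open_def is_ideal_def by blast
  then show ?thesis
    unfolding ideal_space_def topology_generated_by_topspace by simp
qed

lemma openin_basic_open: "n \<in> S \<Longrightarrow> openin (ideal_space S R) (basic_open S R n)"
  unfolding ideal_space_def by (rule topology_generated_by_Basis) auto

lemma basic_open_eq_empty: "n \<notin> S \<Longrightarrow> basic_open S R n = {}"
  by (auto simp: basic_open_def is_ideal_def)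

lemma continuous_map_into_ideal_space:
  assumes "\<And>I. I \<in> topspace Z \<Longrightarrow> is_ideal S R (h I)"
    and "\<And>n. n \<in> S \<Longrightarrow> openin Z {I \<in> topspace Z. h I \<in> basic_open S R n}"
  shows "continuous_map Z (ideal_space S R) h"
  unfolding ideal_space_def
proof (rule continuous_on_generated_topo)
  fix U assume "U \<in> {basic_open S R n | n. n \<in> S}"
  then obtain n where "n \<in> S" "U = basic_open S R n" by blast
  moreover have "h -` U \<inter> topspace Z = {I \<in> topspace Z. h I \<in> U}" by blast
  ultimately show "openin Z (h -` U \<inter> topspace Z)"
    using assms(2) by simp
next
  show "h ` topspace Z \<subseteq> \<Union>{basic_open S R n | n. n \<in> S}"
    using assms(1) topspace_ideal_space[of S R] unfolding ideal_space_def topology_generated_by_topspace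
    by blast
qed

lemma ce_preimages_cong:
  assumes "\<And>I. I \<in> topspace (ideal_space S R) \<Longrightarrow> h I = h' I"
  shows "ce_preimages S R T Q h \<longleftrightarrow> ce_preimages S R T Q h'"
proof -
  have "{I \<in> topspace (ideal_space S R). h I \<in> U} = {I \<in> topspace (ideal_space S R). h' I \<in> U}" for U
    using assms by auto
  then show ?thesis
    unfolding ce_preimages_def by simp
qed

locale reflecting_surjection =
  fixes X Y :: "nat set" and RX RY :: "nat \<Rightarrow> nat \<Rightarrow> bool" and f :: "nat \<Rightarrow> nat"
  assumes image_eq: "f ` X = Y"
    and reflects: "\<forall>x\<in>X. \<forall>x'\<in>X. RX x x' \<longleftrightarrow> RY (f x) (f x')"
begin

definition pullback :: "nat set \<Rightarrow> nat set" where
  "pullback J = {x \<in> X. f x \<in> J}"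

lemma is_ideal_image:
  assumes "is_ideal X RX I"
  shows "is_ideal Y RY (f ` I)"
  unfolding is_ideal_def
proof (intro conjI ballI impI)
  have I: "I \<noteq> {}" "I \<subseteq> X" "\<forall>a\<in>I. \<forall>b\<in>X. RX b a \<longrightarrow> b \<in> I"
    "\<forall>a\<in>I. \<forall>b\<in>I. \<exists>c\<in>I. RX a c \<and> RX b c"
    using assms by (auto simp: is_ideal_def)
  then show "f ` I \<noteq> {}" "f ` I \<subseteq> Y"
    using image_eq by auto
  show "b \<in> f ` I" if "a \<in> f ` I" "b \<in> Y" "RY b a" for a b
  proof -
    from that image_eq obtain x y where "x \<in> I" "a = f x" "y \<in> X" "b = f y" by auto
    with that I reflects show ?thesis by blast
  qed
  show "\<exists>c\<in>f ` I. RY a c \<and> RY b c" if "a \<in> f ` I" "b \<in> f ` I" for a b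
  proof -
    from that obtain x y where "x \<in> I" "y \<in> I" "a = f x" "b = f y" by auto
    moreover then obtain c where "c \<in> I" "RX x c" "RX y c" using I by blast
    ultimately show ?thesis using I reflects by blast
  qed
qed

lemma is_ideal_pullback:
  assumes "is_ideal Y RY J"
  shows "is_ideal X RX (pullback J)"
  unfolding is_ideal_def pullback_def
proof (intro conjI ballI impI)
  have J: "J \<noteq> {}" "J \<subseteq> Y" "\<forall>a\<in>J. \<forall>b\<in>Y. RY b a \<longrightarrow> b \<in> J"
    "\<forall>a\<in>J. \<forall>b\<in>J. \<exists>c\<in>J. RY a c \<and> RY b c"
    using assms by (auto simp: is_ideal_def)
  then show "{x \<in> X. f x \<in> J} \<noteq> {}"
    using image_eq by blast
  show "{x \<in> X. f x \<in> J} \<subseteq> X" by blast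
  show "b \<in> {x \<in> X. f x \<in> J}" if "a \<in> {x \<in> X. f x \<in> J}" "b \<in> X" "RX b a" for a b
    using that J image_eq reflects by blast
  show "\<exists>c\<in>{x \<in> X. f x \<in> J}. RX a c \<and> RX b c"
    if "a \<in> {x \<in> X. f x \<in> J}" "b \<in> {x \<in> X. f x \<in> J}" for a b
  proof -
    from that J obtain c where "c \<in> J" "RY (f a) c" "RY (f b) c" by blast
    moreover from \<open>c \<in> J\<close> J image_eq obtain z where "z \<in> X" "c = f z" by blast
    ultimately show ?thesis using that reflects by blast
  qed
qed

lemma pullback_image:
  assumes "is_ideal X RX I"
  shows "pullback (f ` I) = I"
proof
  show "I \<subseteq> pullback (f ` I)"
    using assms by (auto simp: pullback_def is_ideal_def)
  show "pullback (f ` I) \<subseteq> I"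
  proof
    fix x assume "x \<in> pullback (f ` I)"
    then obtain a where "x \<in> X" "a \<in> I" "f x = f a"
      by (auto simp: pullback_def)
    moreover from \<open>a \<in> I\<close> obtain c where "c \<in> I" "RX a c"
      using assms unfolding is_ideal_def by blast
    ultimately show "x \<in> I"
      using assms reflects unfolding is_ideal_def by (metis subsetD)
  qed
qed

lemma image_pullback: "is_ideal Y RY J \<Longrightarrow> f ` pullback J = J"
  using image_eq by (auto simp: pullback_def is_ideal_def)

lemma preimage_image_basic_open:
  "{I \<in> topspace (ideal_space X RX). f ` I \<in> basic_open Y RY n} =
    \<Union>{basic_open X RX m | m. m \<in> X \<and> f m = n}"
proof (intro equalityI subsetI)
  fix I assume "I \<in> {I \<in> topspace (ideal_space X RX). f ` I \<in> basic_open Y RY n}"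
  then have I: "is_ideal X RX I" and "n \<in> f ` I"
    by (auto simp: topspace_ideal_space basic_open_def)
  then obtain m where "m \<in> I" "f m = n" by blast
  moreover have "m \<in> X"
    using I \<open>m \<in> I\<close> by (auto simp: is_ideal_def)
  ultimately show "I \<in> \<Union>{basic_open X RX m | m. m \<in> X \<and> f m = n}"
    using I by (auto simp: basic_open_def)
next
  fix I assume "I \<in> \<Union>{basic_open X RX m | m. m \<in> X \<and> f m = n}"
  then obtain m where "is_ideal X RX I" "m \<in> I" "f m = n"
    by (auto simp: basic_open_def)
  then show "I \<in> {I \<in> topspace (ideal_space X RX). f ` I \<in> basic_open Y RY n}"
    using is_ideal_image by (auto simp: topspace_ideal_space basic_open_def)
qed

lemma preimage_pullback_basic_open:
  "{J \<in> topspace (ideal_space Y RY). pullback J \<in> basic_open X RX m} =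
    (if m \<in> X then basic_open Y RY (f m) else {})"
proof -
  have "pullback J \<in> basic_open X RX m \<longleftrightarrow> m \<in> X \<and> f m \<in> J" if "is_ideal Y RY J" for J
    using is_ideal_pullback[OF that] by (auto simp: basic_open_def pullback_def)
  then show ?thesis
    by (auto simp: topspace_ideal_space basic_open_def)
qed

lemma basic_open_image_eq_Union_succ:
  assumes "m \<in> X"
  shows "basic_open Y RY (f m) = \<Union>{basic_open Y RY (f m') | m'. m' \<in> X \<and> RX m m'}"
proof (intro equalityI subsetI)
  fix J assume "J \<in> basic_open Y RY (f m)"
  then have J: "is_ideal Y RY J" "f m \<in> J"
    by (auto simp: basic_open_def)
  then obtain c where "c \<in> J" "RY (f m) c"
    unfolding is_ideal_def by blast
  moreover from \<open>c \<in> J\<close> J obtain m' where "m' \<in> X" "c = f m'"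
    using image_eq unfolding is_ideal_def by blast
  ultimately show "J \<in> \<Union>{basic_open Y RY (f m') | m'. m' \<in> X \<and> RX m m'}"
    using J assms reflects by (auto simp: basic_open_def)
next
  fix J assume "J \<in> \<Union>{basic_open Y RY (f m') | m'. m' \<in> X \<and> RX m m'}"
  then obtain m' where "is_ideal Y RY J" "f m' \<in> J" "m' \<in> X" "RX m m'"
    by (auto simp: basic_open_def)
  then show "J \<in> basic_open Y RY (f m)"
    using assms reflects image_eq unfolding basic_open_def is_ideal_def by blast
qed

lemma homeomorphic_maps_image_pullback:
  "homeomorphic_maps (ideal_space X RX) (ideal_space Y RY) ((`) f) pullback"
  unfolding homeomorphic_maps_def
proof (intro conjI)
  show "continuous_map (ideal_space X RX) (ideal_space Y RY) ((`) f)"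
  proof (rule continuous_map_into_ideal_space)
    show "openin (ideal_space X RX) {I \<in> topspace (ideal_space X RX). f ` I \<in> basic_open Y RY n}" for n
      unfolding preimage_image_basic_open by (auto intro: openin_basic_open)
  qed (simp add: topspace_ideal_space is_ideal_image)
  show "continuous_map (ideal_space Y RY) (ideal_space X RX) pullback"
  proof (rule continuous_map_into_ideal_space)
    show "openin (ideal_space Y RY) {J \<in> topspace (ideal_space Y RY). pullback J \<in> basic_open X RX m}"
      if "m \<in> X" for m
      unfolding preimage_pullback_basic_open using that image_eq by (auto intro: openin_basic_open)
  qed (simp add: topspace_ideal_space is_ideal_pullback)
qed (simp_all add: topspace_ideal_space pullback_image image_pullback)

lemma ce_preimages_image:
  assumes "computable_on X f"
  shows "ce_preimages X RX Y RY ((`) f)"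
proof -
  obtain p where p: "\<forall>x\<in>X. eval p [x] (f x)"
    using assms unfolding computable_on_def by blast
  define W where "W = {prod_encode (n, m) | n m. eval p [m] n}"
  have "prod_encode (n, m) \<in> W \<longleftrightarrow> m \<in> X \<and> f m = n" if "m \<in> X" for n m
    using that p eval_det by (auto simp: W_def)
  then have W: "\<Union>{basic_open X RX m | m. prod_encode (n, m) \<in> W} =
      \<Union>{basic_open X RX m | m. m \<in> X \<and> f m = n}" for n
    using basic_open_eq_empty by blast
  show ?thesis
    unfolding ce_preimages_def
  proof (intro exI conjI allI)
    show "ce_set W"
      unfolding W_def by (rule ce_set_graph)
    show "{I \<in> topspace (ideal_space X RX). f ` I \<in> basic_open Y RY n} =
        \<Union>{basic_open X RX m | m. prod_encode (n, m) \<in> W}" for n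
      unfolding preimage_image_basic_open W ..
  qed
qed

lemma ce_preimages_pullback:
  assumes "ce_rel X RX" and "computable_on X f"
  shows "ce_preimages Y RY X RX pullback"
proof -
  obtain p where p: "\<forall>x\<in>X. eval p [x] (f x)"
    using assms(2) unfolding computable_on_def by blast
  define A where "A = {prod_encode (a, b) | a b. a \<in> X \<and> b \<in> X \<and> RX a b}"
  define W where "W = {prod_encode (a, b) | a b. \<exists>c. prod_encode (a, c) \<in> A \<and> eval p [c] b}"
  have "prod_encode (m, k) \<in> W \<longleftrightarrow> (\<exists>m'. m \<in> X \<and> m' \<in> X \<and> RX m m' \<and> k = f m')" for m k
    using p eval_det unfolding W_def A_def by auto
  then have "{basic_open Y RY k | k. prod_encode (m, k) \<in> W} =
      {basic_open Y RY (f m') | m'. m \<in> X \<and> m' \<in> X \<and> RX m m'}" for m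
    by auto
  then have W: "\<Union>{basic_open Y RY k | k. prod_encode (m, k) \<in> W} =
      (if m \<in> X then basic_open Y RY (f m) else {})" for m
    using basic_open_image_eq_Union_succ[of m] by auto
  show ?thesis
    unfolding ce_preimages_def
  proof (intro exI conjI allI)
    show "ce_set W"
      using assms(1) unfolding W_def A_def ce_rel_def by (rule ce_set_relcomp_graph)
    show "{J \<in> topspace (ideal_space Y RY). pullback J \<in> basic_open X RX m} =
        \<Union>{basic_open Y RY k | k. prod_encode (m, k) \<in> W}" for m
      unfolding preimage_pullback_basic_open W ..
  qed
qed

end

theorem lemma20:
  fixes X Y :: "nat set" and RX RY :: "nat \<Rightarrow> nat \<Rightarrow> bool" and f :: "nat \<Rightarrow> nat"
  assumes "trans_on_set X RX" and "trans_on_set Y RY"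
    and "f ` X = Y"
    and "\<forall>x\<in>X. \<forall>x'\<in>X. RX x x' \<longleftrightarrow> RY (f x) (f x')"
  defines "Gf \<equiv> {prod_encode (x, f x) | x. x \<in> X}"
  shows "homeomorphic_map (ideal_space X RX) (ideal_space Y RY) (induced_map Gf)
         \<and> (ce_rel X RX \<and> ce_rel Y RY \<and> computable_on X f
              \<longrightarrow> computable_homeo X RX Y RY (induced_map Gf))"
proof -
  \<comment> \<open>Neither transitivity of the relations nor c.e.-ness of \<open>RY\<close> is needed.\<close>
  interpret reflecting_surjection X Y RX RY f
    using assms(3,4) by unfold_locales
  have induced: "induced_map Gf I = f ` I" if "I \<in> topspace (ideal_space X RX)" for I
    using that by (auto simp: topspace_ideal_space is_ideal_def induced_map_def Gf_def)
  have homeo: "homeomorphic_maps (ideal_space X RX) (ideal_space Y RY) (induced_map Gf) pullback"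
    by (rule homeomorphic_maps_eq[OF homeomorphic_maps_image_pullback]) (simp_all add: induced)
  then have inverse: "inv_into (topspace (ideal_space X RX)) (induced_map Gf) J = pullback J"
    if "J \<in> topspace (ideal_space Y RY)" for J
    using that by (rule homeomorphic_maps_inv_into)
  have "ce_preimages X RX Y RY (induced_map Gf) \<longleftrightarrow> ce_preimages X RX Y RY ((`) f)"
    by (rule ce_preimages_cong) (rule induced)
  moreover have "ce_preimages Y RY X RX (inv_into (topspace (ideal_space X RX)) (induced_map Gf))
      \<longleftrightarrow> ce_preimages Y RY X RX pullback"
    by (rule ce_preimages_cong) (rule inverse)
  ultimately show ?thesis
    using homeo ce_preimages_image ce_preimages_pullback
    unfolding computable_homeo_def homeomorphic_map_maps by blast
qed

end
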